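(* Let $k\ge2$, $n\ge1$ be integers, let $\bar{\mathcal{P}}\in\mathbb{R}^{[k,n]}$ be a columnwise-substochastic tensor, $\mathbf{v}\in\mathbb{R}^n$ a stochastic vector and $\alpha\in[0,1)$. Then the MLPPR system $(\mathbf{e}^T\mathbf{y})^{k-2}\mathbf{y}-\alpha\bar{\mathcal{P}}\mathbf{y}^{k-1}=\mathbf{v}$ has at least one nonzero solution $\mathbf{y}_*\in\mathbb{R}^n_+$.
   Context: For $\mathcal{P}\in\mathbb{R}^{[k,n]}$ (real tensors of order $k$, dimension $n$) and $\mathbf{y}\in\mathbb{R}^n$, $(\mathcal{P}\mathbf{y}^{k-1})_i=\sum_{i_2,\dots,i_k}p_{i i_2\dots i_k}y_{i_2}\cdots y_{i_k}$. $\bar{\mathcal{P}}$ is columnwise-substochastic if its entries are nonnegative and $\sum_{i}\bar p_{i i_2\dots i_k}\le1$ for all $i_2,\dots,i_k$. $\mathbf{e}$ is the all-ones vector; a stochastic vector is nonnegative with entries summing to $1$. The MLPPR system $(I\circ\mathbf{e}^{\circ(k-2)}-\alpha\bar{\mathcal{P}})\mathbf{y}^{k-1}=\mathbf{v}$ is exactly $(\mathbf{e}^T\mathbf{y})^{k-2}\mathbf{y}-\alpha\bar{\mathcal{P}}\mathbf{y}^{k-1}=\mathbf{v}$. *)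

theory Defs
  imports Complex_Main
begin

text \<open>Dimension n is the cardinality of a finite index type 'n.
  A tensor of order k and dimension n is a function on index lists; only its
  values on lists of length k are relevant. Entry p_{i i_2 ... i_k} is P (i # [i_2,...,i_k]).\<close>

definition index_tuples :: "nat \<Rightarrow> ('n::finite) list set" where
  "index_tuples m = {js. length js = m}"

definition tensor_apply :: "nat \<Rightarrow> (('n::finite) list \<Rightarrow> real) \<Rightarrow> ('n \<Rightarrow> real) \<Rightarrow> 'n \<Rightarrow> real" where
  "tensor_apply k P y i = (\<Sum>js\<in>index_tuples (k - 1). P (i # js) * (\<Prod>j\<leftarrow>js. y j))"

definition columnwise_substochastic :: "nat \<Rightarrow> (('n::finite) list \<Rightarrow> real) \<Rightarrow> bool" where
  "columnwise_substochastic k P \<longleftrightarrow>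
     (\<forall>i js. js \<in> index_tuples (k - 1) \<longrightarrow> P (i # js) \<ge> 0) \<and>
     (\<forall>js \<in> index_tuples (k - 1). (\<Sum>i\<in>UNIV. P (i # js)) \<le> 1)"

definition stochastic_vector :: "('n::finite \<Rightarrow> real) \<Rightarrow> bool" where
  "stochastic_vector v \<longleftrightarrow> (\<forall>i. v i \<ge> 0) \<and> (\<Sum>i\<in>UNIV. v i) = 1"

end

theory Submission
  imports Defs "HOL-Analysis.Analysis"
begin

text \<open>The MLPPR system is homogeneous of degree k - 1 in y, so it suffices to solve it on the
  probability simplex up to a positive factor. On the simplex the map
  x \<mapsto> (1 - \<alpha> c(x)) v + \<alpha> P x^(k-1), where c(x) = e^T P x^(k-1) \<le> 1 by substochasticity,
  is a continuous self-map, so Brouwer's theorem gives a fixed point x. Then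
  x - \<alpha> P x^(k-1) = (1 - \<alpha> c(x)) v with 1 - \<alpha> c(x) > 0, and rescaling x by
  (1 - \<alpha> c(x))^(-1/(k-1)) yields the solution.\<close>

lemma index_tuples_Suc:
  "index_tuples (Suc m) = (\<lambda>(a, js). a # js) ` (UNIV \<times> (index_tuples m :: ('n::finite) list set))"
proof (rule subset_antisym)
  show "index_tuples (Suc m) \<subseteq> (\<lambda>(a, js). a # js) ` (UNIV \<times> (index_tuples m :: 'n list set))"
  proof
    fix xs :: "'n list"
    assume "xs \<in> index_tuples (Suc m)"
    then obtain a js where "xs = a # js" "length js = m"
      by (cases xs) (auto simp: index_tuples_def)
    then show "xs \<in> (\<lambda>(a, js). a # js) ` (UNIV \<times> (index_tuples m :: 'n list set))"
      by (force simp: index_tuples_def)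
  qed
qed (auto simp: index_tuples_def)

lemma sum_prod_list_index_tuples:
  fixes x :: "('n::finite) \<Rightarrow> real"
  shows "(\<Sum>js\<in>index_tuples m. \<Prod>j\<leftarrow>js. x j) = (\<Sum>j\<in>UNIV. x j) ^ m"
proof (induction m)
  case 0
  have "index_tuples 0 = {[] :: 'n list}"
    by (auto simp: index_tuples_def)
  then show ?case by simp
next
  case (Suc m)
  have inj: "inj_on (\<lambda>(a, js). a # js) (UNIV \<times> (index_tuples m :: 'n list set))"
    by (auto simp: inj_on_def)
  have "(\<Sum>js\<in>index_tuples (Suc m). \<Prod>j\<leftarrow>js. x j)
      = (\<Sum>(a, js)\<in>UNIV \<times> (index_tuples m :: 'n list set). x a * (\<Prod>j\<leftarrow>js. x j))"
    unfolding index_tuples_Suc by (subst sum.reindex[OF inj]) (auto intro!: sum.cong)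
  also have "\<dots> = (\<Sum>a\<in>UNIV. x a * (\<Sum>js\<in>index_tuples m. \<Prod>j\<leftarrow>js. x j))"
    by (simp add: sum.cartesian_product[symmetric] sum_distrib_left)
  also have "\<dots> = (\<Sum>j\<in>UNIV. x j) ^ Suc m"
    by (simp add: Suc sum_distrib_right[symmetric])
  finally show ?case .
qed

lemma prod_list_scale:
  "(\<Prod>j\<leftarrow>js. (s::'a::comm_monoid_mult) * x j) = s ^ length js * (\<Prod>j\<leftarrow>js. x j)"
  by (induction js) (auto simp: algebra_simps)

lemma tensor_apply_scale:
  "tensor_apply k P (\<lambda>j. s * x j) i = s ^ (k - 1) * tensor_apply k P x i"
  unfolding tensor_apply_def
  by (simp add: sum_distrib_left prod_list_scale index_tuples_def algebra_simps)

lemma tensor_apply_nonneg: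
  assumes "columnwise_substochastic k P" "\<And>j. 0 \<le> x j"
  shows "0 \<le> tensor_apply k P x i"
  using assms unfolding tensor_apply_def columnwise_substochastic_def
  by (auto intro!: sum_nonneg mult_nonneg_nonneg prod_list_nonneg)

lemma sum_tensor_apply_le:
  assumes "columnwise_substochastic k P" "\<And>j. 0 \<le> x j"
  shows "(\<Sum>i\<in>UNIV. tensor_apply k P x i) \<le> (\<Sum>j\<in>UNIV. x j) ^ (k - 1)"
proof -
  have "(\<Sum>i\<in>UNIV. tensor_apply k P x i)
      = (\<Sum>js\<in>index_tuples (k - 1). (\<Sum>i\<in>UNIV. P (i # js)) * (\<Prod>j\<leftarrow>js. x j))"
    unfolding tensor_apply_def by (subst sum.swap) (simp add: sum_distrib_right)
  also have "\<dots> \<le> (\<Sum>js\<in>index_tuples (k - 1). \<Prod>j\<leftarrow>js. x j)"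
    using assms unfolding columnwise_substochastic_def
    by (intro sum_mono mult_left_le_one_le prod_list_nonneg) (auto intro: sum_nonneg)
  also have "\<dots> = (\<Sum>j\<in>UNIV. x j) ^ (k - 1)"
    by (rule sum_prod_list_index_tuples)
  finally show ?thesis .
qed

lemma continuous_on_tensor_apply:
  "continuous_on S (\<lambda>z::real^('n::finite). tensor_apply k P (($) z) i)"
proof -
  have "continuous_on S (\<lambda>z::real^'n. \<Prod>j\<leftarrow>js. z $ j)" for js :: "'n list"
    by (induction js) (auto intro!: continuous_intros)
  then show ?thesis
    unfolding tensor_apply_def by (intro continuous_intros)
qed

text \<open>Brouwer's theorem is stated for euclidean spaces; the function space 'n \<Rightarrow> real is not
  an instance, so the simplex lives in real^'n.\<close>

definition stochastic_simplex :: "(real^'n) set" where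
  "stochastic_simplex = {x. stochastic_vector (($) x)}"

lemma stochastic_simplex_subset_cbox:
  "(stochastic_simplex :: (real^('n::finite)) set) \<subseteq> cbox 0 (\<chi> i. 1)"
proof
  fix x :: "real^'n"
  assume "x \<in> stochastic_simplex"
  then have "0 \<le> x $ i" "x $ i \<le> 1" for i
    using member_le_sum[of i UNIV "($) x"]
    by (auto simp: stochastic_simplex_def stochastic_vector_def)
  then show "x \<in> cbox 0 (\<chi> i. 1)"
    by (simp add: mem_box_cart)
qed

lemma closed_stochastic_simplex: "closed (stochastic_simplex :: (real^('n::finite)) set)"
proof -
  have "stochastic_simplex = {x::real^'n. \<forall>i. 0 \<le> x $ i} \<inter> {x. (\<Sum>i\<in>UNIV. x $ i) = 1}"
    by (auto simp: stochastic_simplex_def stochastic_vector_def)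
  also have "closed \<dots>"
    by (intro closed_Int closed_positive_orthant closed_Collect_eq continuous_intros)
  finally show ?thesis .
qed

lemma compact_stochastic_simplex: "compact stochastic_simplex"
  using closed_Int_compact[OF closed_stochastic_simplex compact_cbox]
    stochastic_simplex_subset_cbox
  by (metis inf.absorb1)

lemma convex_stochastic_simplex: "convex stochastic_simplex"
  unfolding convex_def stochastic_simplex_def stochastic_vector_def
  by (auto simp: sum.distrib sum_distrib_left[symmetric])

lemma stochastic_simplex_fixed_point:
  fixes T :: "real^('n::finite) \<Rightarrow> real^'n"
  assumes "continuous_on stochastic_simplex T" "T ` stochastic_simplex \<subseteq> stochastic_simplex"
  shows "\<exists>x\<in>stochastic_simplex. T x = x"
proof -
  have "(\<chi> i. 1 / real CARD('n)) \<in> (stochastic_simplex :: (real^'n) set)"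
    by (simp add: stochastic_simplex_def stochastic_vector_def)
  then show ?thesis
    using brouwer[OF compact_stochastic_simplex convex_stochastic_simplex _ assms(1)]
      assms(2)[folded image_subset_iff_funcset]
    by blast
qed

definition mlppr_map ::
    "nat \<Rightarrow> real \<Rightarrow> (('n::finite) list \<Rightarrow> real) \<Rightarrow> ('n \<Rightarrow> real) \<Rightarrow> ('n \<Rightarrow> real) \<Rightarrow> 'n \<Rightarrow> real" where
  "mlppr_map k \<alpha> P v x i =
     (1 - \<alpha> * (\<Sum>j\<in>UNIV. tensor_apply k P x j)) * v i + \<alpha> * tensor_apply k P x i"

lemma stochastic_vector_mlppr_map:
  assumes "columnwise_substochastic k P" "stochastic_vector v" "0 \<le> \<alpha>" "\<alpha> \<le> 1"
    and "stochastic_vector x"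
  shows "stochastic_vector (mlppr_map k \<alpha> P v x)"
proof -
  have x: "\<And>j. 0 \<le> x j" "(\<Sum>j\<in>UNIV. x j) = 1"
    using assms(5) by (auto simp: stochastic_vector_def)
  have "(\<Sum>j\<in>UNIV. tensor_apply k P x j) \<le> 1"
    using sum_tensor_apply_le[of k P x, OF assms(1) x(1)] x(2) by simp
  then have "\<alpha> * (\<Sum>j\<in>UNIV. tensor_apply k P x j) \<le> 1"
    using assms(3,4) tensor_apply_nonneg[of k P x, OF assms(1) x(1)]
    by (simp add: mult_le_one sum_nonneg)
  then show ?thesis
    using assms(2,3) tensor_apply_nonneg[of k P x, OF assms(1) x(1)]
    by (auto simp: stochastic_vector_def mlppr_map_def sum.distrib sum_distrib_left[symmetric])
qed

lemma mlppr_residual_scale: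
  assumes "k \<ge> 2" "(\<Sum>j\<in>UNIV. x j) = 1"
  shows "(\<Sum>j\<in>UNIV. s * x j) ^ (k - 2) * (s * x i) - \<alpha> * tensor_apply k P (\<lambda>j. s * x j) i
       = s ^ (k - 1) * (x i - \<alpha> * tensor_apply k P x i)"
proof -
  have "s ^ (k - 2) * s = s ^ (k - 1)"
    using assms(1) by (simp flip: power_Suc2 add: Suc_diff_Suc numeral_2_eq_2)
  then show ?thesis
    using assms(2) by (simp add: tensor_apply_scale sum_distrib_left[symmetric] algebra_simps)
qed

lemma mlppr_solution_of_fixed_point:
  assumes "k \<ge> 2" "columnwise_substochastic k P" "0 \<le> \<alpha>" "\<alpha> < 1"
    and "stochastic_vector x" "mlppr_map k \<alpha> P v x = x"
  shows "\<exists>y. (\<forall>i. y i \<ge> 0) \<and> y \<noteq> (\<lambda>_. 0) \<and>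
           (\<forall>i. (\<Sum>j\<in>UNIV. y j) ^ (k - 2) * y i - \<alpha> * tensor_apply k P y i = v i)"
proof -
  have x: "\<And>j. 0 \<le> x j" "(\<Sum>j\<in>UNIV. x j) = 1"
    using assms(5) by (auto simp: stochastic_vector_def)
  define \<beta> where "\<beta> = 1 - \<alpha> * (\<Sum>j\<in>UNIV. tensor_apply k P x j)"
  have "(\<Sum>j\<in>UNIV. tensor_apply k P x j) \<le> 1"
    using sum_tensor_apply_le[of k P x, OF assms(2) x(1)] x(2) by simp
  then have "\<alpha> * (\<Sum>j\<in>UNIV. tensor_apply k P x j) \<le> \<alpha>"
    using assms(3) by (rule mult_left_le)
  with assms(4) have \<beta>: "\<beta> > 0"
    by (simp add: \<beta>_def)
  have fixed: "x i - \<alpha> * tensor_apply k P x i = \<beta> * v i" for i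
    using fun_cong[OF assms(6), of i] by (simp add: mlppr_map_def \<beta>_def)
  define s where "s = root (k - 1) (1 / \<beta>)"
  have "k - 1 > 0"
    using assms(1) by simp
  with \<beta> have "s > 0" "s ^ (k - 1) * \<beta> = 1"
    by (simp_all add: s_def)
  define y where "y = (\<lambda>j. s * x j)"
  show ?thesis
  proof (intro exI[of _ y] conjI allI)
    show "0 \<le> y i" for i
      using \<open>s > 0\<close> x(1) by (simp add: y_def)
    show "y \<noteq> (\<lambda>_. 0)"
    proof
      assume "y = (\<lambda>_. 0)"
      then have "(\<Sum>j\<in>UNIV. y j) = 0"
        by simp
      moreover have "(\<Sum>j\<in>UNIV. y j) = s"
        by (simp add: y_def x(2) flip: sum_distrib_left)
      ultimately show False
        using \<open>s > 0\<close> by simp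
    qed
    show "(\<Sum>j\<in>UNIV. y j) ^ (k - 2) * y i - \<alpha> * tensor_apply k P y i = v i" for i
      using \<open>s ^ (k - 1) * \<beta> = 1\<close>
      by (simp add: y_def mlppr_residual_scale[OF assms(1) x(2)] fixed)
  qed
qed

theorem theorem3p6:
  fixes k :: nat and P :: "('n::finite) list \<Rightarrow> real" and v :: "'n \<Rightarrow> real" and \<alpha> :: real
  assumes "k \<ge> 2"
    and "columnwise_substochastic k P"
    and "stochastic_vector v"
    and "0 \<le> \<alpha>" and "\<alpha> < 1"
  shows "\<exists>y :: 'n \<Rightarrow> real. (\<forall>i. y i \<ge> 0) \<and> y \<noteq> (\<lambda>_. 0) \<and>
           (\<forall>i. (\<Sum>j\<in>UNIV. y j) ^ (k - 2) * y i - \<alpha> * tensor_apply k P y i = v i)"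
proof -
  define T where "T z = (\<chi> i. mlppr_map k \<alpha> P v (($) z) i)" for z :: "real^'n"
  have "continuous_on stochastic_simplex T"
    unfolding T_def mlppr_map_def
    by (intro continuous_on_vec_lambda continuous_intros continuous_on_tensor_apply)
  moreover have "T ` stochastic_simplex \<subseteq> stochastic_simplex"
    using stochastic_vector_mlppr_map[OF assms(2,3,4)] assms(5)
    by (auto simp: T_def stochastic_simplex_def vec_lambda_inverse)
  ultimately obtain z where "z \<in> stochastic_simplex" "T z = z"
    using stochastic_simplex_fixed_point by blast
  then have "stochastic_vector (($) z)" "mlppr_map k \<alpha> P v (($) z) = ($) z"
    by (auto simp: stochastic_simplex_def T_def vec_eq_iff)
  then show ?thesis
    using mlppr_solution_of_fixed_point[OF assms(1,2,4,5)] by blast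
qed

end
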